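(* Let $\mathbb{K}$ be a field of characteristic zero, let $\mathfrak{g}=(V,\mu)$ be a non-perfect Lie algebra over $\mathbb{K}$ with $\dim V=n$, and let $t\in\mathbb{K}\setminus\{0,1\}$. Then $$\dim\Omega(\mathfrak{g})\leq \widehat{\phi}_{n,t}(\mathfrak{g})\leq \dim\Omega(\mathfrak{g})+\dim L\big(\mathfrak{g}^{(2)};\mathcal{Z}(\mathfrak{g})\cap\mathfrak{g}^{(2)}\big).$$
   Context: $\mathfrak{g}^{(2)}$ is the linear span of all products $\mu(X,Y)$; non-perfect means $\mathfrak{g}^{(2)}\neq\mathfrak{g}$. $\mathcal{Z}(\mathfrak{g})=\{X:\mu(X,Y)=0\ \forall Y\}$ is the center. $L(U;W)$ is the space of linear maps $U\to W$. $\Omega(\mathfrak{g})=\{T\in L(V;V): \operatorname{Im}T\subseteq\mathcal{Z}(\mathfrak{g}),\ \mathfrak{g}^{(2)}\subseteq\operatorname{Ker}T\}$. $\widehat{\phi}_{n,t}(\mathfrak{g})=\dim\mathcal{D}(t,1,0)(\mathfrak{g})$, where $\mathcal{D}(t,1,0)(\mathfrak{g})$ is the space of linear maps $D:V\to V$ with $tD\mu(X,Y)=\mu(DX,Y)$ for all $X,Y\in V$. *)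

theory Defs
  imports Complex_Main "HOL-Library.Function_Algebras"
begin

definition fscale :: "('k \<Rightarrow> 'v \<Rightarrow> 'v) \<Rightarrow> 'k \<Rightarrow> ('u \<Rightarrow> 'v) \<Rightarrow> ('u \<Rightarrow> 'v)" where
  "fscale s c f = (\<lambda>x. s c (f x))"

text \<open>A Lie algebra g = (V, mu) over the field 'k, with V the whole type 'v
  (a vector space via scale): mu bilinear, alternating, Jacobi identity.\<close>
definition lie_algebra :: "('k::field \<Rightarrow> 'v::ab_group_add \<Rightarrow> 'v) \<Rightarrow> ('v \<Rightarrow> 'v \<Rightarrow> 'v) \<Rightarrow> bool" where
  "lie_algebra s mu \<longleftrightarrow> vector_space s
     \<and> (\<forall>y. Vector_Spaces.linear s s (\<lambda>x. mu x y))
     \<and> (\<forall>x. Vector_Spaces.linear s s (\<lambda>y. mu x y))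
     \<and> (\<forall>x. mu x x = 0)
     \<and> (\<forall>x y z. mu x (mu y z) + mu y (mu z x) + mu z (mu x y) = 0)"

definition derived :: "('k::field \<Rightarrow> 'v::ab_group_add \<Rightarrow> 'v) \<Rightarrow> ('v \<Rightarrow> 'v \<Rightarrow> 'v) \<Rightarrow> 'v set" where
  "derived s mu = module.span s {mu x y | x y. True}"

definition center :: "('v \<Rightarrow> 'v \<Rightarrow> 'v::zero) \<Rightarrow> 'v set" where
  "center mu = {x. \<forall>y. mu x y = 0}"

definition Omega :: "('k::field \<Rightarrow> 'v::ab_group_add \<Rightarrow> 'v) \<Rightarrow> ('v \<Rightarrow> 'v \<Rightarrow> 'v) \<Rightarrow> ('v \<Rightarrow> 'v) set" where
  "Omega s mu = {T. Vector_Spaces.linear s s T \<and> range T \<subseteq> center mu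
                   \<and> (\<forall>x\<in>derived s mu. T x = 0)}"

definition Dt10 :: "('k::field \<Rightarrow> 'v::ab_group_add \<Rightarrow> 'v) \<Rightarrow> ('v \<Rightarrow> 'v \<Rightarrow> 'v) \<Rightarrow> 'k \<Rightarrow> ('v \<Rightarrow> 'v) set" where
  "Dt10 s mu t = {D. Vector_Spaces.linear s s D \<and> (\<forall>x y. s t (D (mu x y)) = mu (D x) y)}"

text \<open>phi-hat_{n,t}(g) = dim D(t,1,0)(g) (n = dim V is determined by g).\<close>
definition phi_hat :: "('k::field \<Rightarrow> 'v::ab_group_add \<Rightarrow> 'v) \<Rightarrow> ('v \<Rightarrow> 'v \<Rightarrow> 'v) \<Rightarrow> 'k \<Rightarrow> nat" where
  "phi_hat s mu t = vector_space.dim (fscale s) (Dt10 s mu t)"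

text \<open>L(U;W) for subspaces U, W of V: linear maps U -> W, represented
  extensionally as maps on V that vanish outside U.\<close>
definition Lmaps :: "('k::field \<Rightarrow> 'v::ab_group_add \<Rightarrow> 'v) \<Rightarrow> 'v set \<Rightarrow> 'v set \<Rightarrow> ('v \<Rightarrow> 'v) set" where
  "Lmaps s U W = {f. (\<forall>x\<in>U. f x \<in> W)
                    \<and> (\<forall>x\<in>U. \<forall>y\<in>U. f (x + y) = f x + f y)
                    \<and> (\<forall>c. \<forall>x\<in>U. f (s c x) = s c (f x))
                    \<and> (\<forall>x. x \<notin> U \<longrightarrow> f x = 0)}"

end

(* Every D in D(t,1,0) satisfies t D[X,Y] = [DX,Y] = [X,DY]; applied to the Jacobi identity this
   shows D[[X,Y],Z] = 0 when t is neither 0 nor 1, hence D maps g^(2) into Z(g) \<inter> g^(2).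
   Restriction to g^(2) is thus a linear map D(t,1,0) \<rightarrow> L(g^(2); Z(g) \<inter> g^(2)) whose kernel
   is exactly Omega(g), and Omega(g) \<subseteq> D(t,1,0). Both inequalities follow, the second by
   rank-nullity; all spaces involved are finite-dimensional because V is. *)

theory Submission
  imports Defs
begin

lemma sum_fun_apply: "sum f A x = (\<Sum>a\<in>A. f a x)"
  by (induction A rule: infinite_finite_induct) auto

lemma vector_space_fscale:
  assumes "vector_space s"
  shows "vector_space (fscale s :: 'k::field \<Rightarrow> ('u \<Rightarrow> 'v::ab_group_add) \<Rightarrow> 'u \<Rightarrow> 'v)"
  using assms unfolding vector_space_def fscale_def by (auto simp: fun_eq_iff)

context vector_space
begin

lemma dim_subset_finite_span:
  assumes "S \<subseteq> T" "T \<subseteq> span F" "finite F"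
  shows "dim S \<le> dim T"
proof -
  obtain B where B: "B \<subseteq> T" "independent B" "T \<subseteq> span B" "card B = dim T"
    using basis_exists by blast
  have "finite B" using independent_span_bound[OF assms(3) B(2)] B(1) assms(2) by blast
  then show ?thesis using dim_le_card[of S B] assms(1) B by auto
qed

lemma additive_homogeneous_on_subspace_sum:
  assumes "subspace U" "finite A" "A \<subseteq> U"
    and add: "\<forall>x\<in>U. \<forall>y\<in>U. f (x + y) = f x + f y"
    and hom: "\<forall>c. \<forall>x\<in>U. f (c *s x) = c *s f x"
  shows "f (\<Sum>b\<in>A. a b *s b) = (\<Sum>b\<in>A. a b *s f b)"
  using assms(2,3)
proof (induction A rule: finite_induct)
  case empty
  then show ?case using hom subspace_0[OF assms(1)] scale_zero_left by (metis sum.empty)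
next
  case (insert x A)
  have "(\<Sum>b\<in>A. a b *s b) \<in> U" "a x *s x \<in> U"
    using insert assms(1) by (auto intro!: subspace_sum subspace_scale)
  then show ?case using insert add hom by simp
qed

lemma expansion_in_fscale_span:
  assumes "finite A" "finite B" "span B = UNIV"
    and expansion: "\<And>x. h x = (\<Sum>a\<in>A. c x a *s h a)"
  shows "h \<in> module.span (fscale scale) ((\<lambda>(a, e) x. c x a *s e) ` (A \<times> B))"
proof -
  interpret F: vector_space "fscale scale :: 'a \<Rightarrow> ('c \<Rightarrow> 'b) \<Rightarrow> 'c \<Rightarrow> 'b"
    by (rule vector_space_fscale) (rule vector_space_axioms)
  have "\<forall>a. \<exists>u. h a = (\<Sum>e\<in>B. u e *s e)"
    using span_finite[OF assms(2)] assms(3) by blast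
  then obtain u where u: "\<And>a. h a = (\<Sum>e\<in>B. u a e *s e)" by metis
  let ?g = "\<lambda>(a, e) x. c x a *s e"
  have "h = (\<Sum>p\<in>A \<times> B. fscale scale (u (fst p) (snd p)) (?g p))"
  proof
    fix x
    have "h x = (\<Sum>a\<in>A. c x a *s h a)" by (rule expansion)
    also have "\<dots> = (\<Sum>a\<in>A. \<Sum>e\<in>B. (u a e * c x a) *s e)"
      by (simp add: u scale_sum_right mult.commute)
    also have "\<dots> = (\<Sum>p\<in>A \<times> B. fscale scale (u (fst p) (snd p)) (?g p)) x"
      by (simp add: sum_fun_apply fscale_def split_def sum.cartesian_product)
    finally show "h x = \<dots>" .
  qed
  also have "\<dots> \<in> F.span (?g ` (A \<times> B))"
    by (intro F.span_sum F.span_scale F.span_base) auto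
  finally show ?thesis .
qed

lemma Lmaps_finite_span:
  assumes "finite B" "span B = UNIV" "subspace U"
  obtains G where "finite G" "Lmaps scale U W \<subseteq> module.span (fscale scale) G"
proof -
  obtain BU where BU: "BU \<subseteq> U" "independent BU" "U \<subseteq> span BU"
    using maximal_independent_subset[of U] by blast
  have "finite BU" using independent_span_bound[OF assms(1) BU(2)] assms(2) by simp
  define c where "c x b = (if x \<in> U then representation BU x b else 0)" for x b
  have "h \<in> module.span (fscale scale) ((\<lambda>(a, e) x. c x a *s e) ` (BU \<times> B))"
    if h: "h \<in> Lmaps scale U W" for h
  proof (rule expansion_in_fscale_span[OF \<open>finite BU\<close> assms(1,2)])
    fix x
    have add: "\<forall>x\<in>U. \<forall>y\<in>U. h (x + y) = h x + h y"
      and hom: "\<forall>c. \<forall>x\<in>U. h (c *s x) = c *s h x"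
      and outside: "x \<notin> U \<Longrightarrow> h x = 0"
      using h unfolding Lmaps_def by auto
    show "h x = (\<Sum>b\<in>BU. c x b *s h b)"
    proof (cases "x \<in> U")
      case True
      then have "h x = h (\<Sum>b\<in>BU. representation BU x b *s b)"
        using sum_representation_eq[of BU x BU] BU \<open>finite BU\<close> by auto
      also have "\<dots> = (\<Sum>b\<in>BU. representation BU x b *s h b)"
        by (rule additive_homogeneous_on_subspace_sum[OF assms(3) \<open>finite BU\<close> BU(1) add hom])
      finally show ?thesis using True unfolding c_def by simp
    qed (simp add: outside c_def)
  qed
  then show ?thesis
    by (intro that[of "(\<lambda>(a, e) x. c x a *s e) ` (BU \<times> B)"]) (auto simp: \<open>finite BU\<close> assms(1))
qed

lemma linear_in_Lmaps_UNIV: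
  assumes "Vector_Spaces.linear scale scale T"
  shows "T \<in> Lmaps scale UNIV UNIV"
  using assms unfolding Lmaps_def Vector_Spaces.linear_iff by auto

end

context vector_space_pair
begin

lemma dim_le_dim_kernel_add_dim_image:
  assumes f: "Vector_Spaces.linear s1 s2 f"
    and S: "vs1.subspace S" "S \<subseteq> vs1.span F" "finite F"
  shows "vs1.dim S \<le> vs1.dim {x \<in> S. f x = 0} + vs2.dim (f ` S)"
proof -
  define K where "K = {x \<in> S. f x = 0}"
  obtain C where C: "C \<subseteq> K" "vs1.independent C" "K \<subseteq> vs1.span C" "card C = vs1.dim K"
    using vs1.basis_exists by blast
  obtain W where W: "W \<subseteq> f ` S" "vs2.independent W" "f ` S \<subseteq> vs2.span W"
      "card W = vs2.dim (f ` S)"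
    using vs2.basis_exists by blast
  have finite_C: "finite C"
    using vs1.independent_span_bound[OF S(3) C(2)] C(1) S(2) unfolding K_def by blast
  have finite_W: "finite W"
    using vs2.independent_span_bound[OF finite_imageI[OF S(3)] W(2)] W(1)
      linear_spans_image[OF f S(2)] by blast
  have "\<forall>w\<in>W. \<exists>x. x \<in> S \<and> f x = w" using W(1) by blast
  then obtain g where g: "\<And>w. w \<in> W \<Longrightarrow> g w \<in> S \<and> f (g w) = w" by metis
  have "S \<subseteq> vs1.span (C \<union> g ` W)"
  proof
    fix x assume x: "x \<in> S"
    have "f ` g ` W = W" using g by force
    then have "vs2.span W = f ` vs1.span (g ` W)"
      using linear_span_image[OF f, of "g ` W"] by simp
    then have "f x \<in> f ` vs1.span (g ` W)" using W(3) x by blast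
    then obtain y where y: "y \<in> vs1.span (g ` W)" "f y = f x" by (metis imageE)
    have "y \<in> S" using y(1) g vs1.span_minimal[OF _ S(1), of "g ` W"] by blast
    then have "x - y \<in> K"
      using x y(2) vs1.subspace_diff[OF S(1)] linear_diff[OF f] unfolding K_def by simp
    then have "x - y \<in> vs1.span (C \<union> g ` W)" using C(3) vs1.span_mono[of C] by blast
    moreover have "y \<in> vs1.span (C \<union> g ` W)" using y(1) vs1.span_mono[of "g ` W"] by blast
    ultimately have "(x - y) + y \<in> vs1.span (C \<union> g ` W)" by (rule vs1.span_add)
    then show "x \<in> vs1.span (C \<union> g ` W)" by simp
  qed
  then have "vs1.dim S \<le> card (C \<union> g ` W)"
    using finite_C finite_W by (intro vs1.dim_le_card) auto
  also have "\<dots> \<le> card C + card W"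
    using card_Un_le[of C "g ` W"] card_image_le[OF finite_W, of g] by linarith
  finally show ?thesis using C(4) W(4) unfolding K_def by simp
qed

end

definition restrict0 :: "'a set \<Rightarrow> ('a \<Rightarrow> 'b::zero) \<Rightarrow> 'a \<Rightarrow> 'b" where
  "restrict0 U f x = (if x \<in> U then f x else 0)"

lemma linear_restrict0:
  assumes "vector_space s"
  shows "Vector_Spaces.linear (fscale s) (fscale s) (restrict0 U)"
proof -
  interpret vector_space s by (fact assms)
  show ?thesis
    using vector_space_fscale[OF assms]
    unfolding Vector_Spaces.linear_iff restrict0_def fscale_def by (auto simp: fun_eq_iff)
qed

locale lie_alg =
  fixes scale :: "'k::field \<Rightarrow> 'v::ab_group_add \<Rightarrow> 'v" (infixr \<open>*s\<close> 75)
    and mu :: "'v \<Rightarrow> 'v \<Rightarrow> 'v"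
  assumes lie_algebra: "lie_algebra scale mu"
begin

sublocale vector_space scale
  using lie_algebra unfolding lie_algebra_def by blast

lemma bracket_add_left: "mu (a + b) c = mu a c + mu b c"
  and bracket_add_right: "mu a (b + c) = mu a b + mu a c"
  and bracket_scale_left: "mu (k *s a) b = k *s mu a b"
  and bracket_self: "mu a a = 0"
  and jacobi: "mu x (mu y z) + mu y (mu z x) + mu z (mu x y) = 0"
  using lie_algebra unfolding lie_algebra_def Vector_Spaces.linear_iff by auto

lemma bracket_zero_left [simp]: "mu 0 b = 0"
  using bracket_scale_left[of 0 0 b] by simp

lemma bracket_antisym: "mu a b = - mu b a"
proof -
  have "mu a b + mu b a = mu (a + b) (a + b)"
    by (simp add: bracket_add_left bracket_add_right bracket_self[of a] bracket_self[of b])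
  also have "\<dots> = 0" by (rule bracket_self)
  finally show ?thesis by (simp only: eq_neg_iff_add_eq_0)
qed

lemma jacobi_left: "mu (mu x y) z + mu (mu y z) x + mu (mu z x) y = 0"
proof -
  have "mu (mu x y) z + mu (mu y z) x + mu (mu z x) y
      = - (mu x (mu y z) + mu y (mu z x) + mu z (mu x y))"
    using bracket_antisym[of "mu y z" x] bracket_antisym[of "mu z x" y]
      bracket_antisym[of "mu x y" z] by (simp add: algebra_simps)
  then show ?thesis by (simp add: jacobi)
qed

lemma subspace_center: "subspace (center mu)"
  unfolding subspace_def center_def by (simp add: bracket_add_left bracket_scale_left)

lemma subspace_derived: "subspace (derived scale mu)"
  unfolding derived_def by simp

lemma bracket_in_derived: "mu x y \<in> derived scale mu"
  unfolding derived_def by (rule span_base) auto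

context
  fixes t :: 'k and D :: "'v \<Rightarrow> 'v"
  assumes D: "D \<in> Dt10 scale mu t"
begin

lemma Dt10_linear: "Vector_Spaces.linear scale scale D"
  using D unfolding Dt10_def by blast

interpretation D: Vector_Spaces.linear scale scale D
  by (rule Dt10_linear)

lemma Dt10_bracket_left: "t *s D (mu a b) = mu (D a) b"
  using D unfolding Dt10_def by blast

lemma Dt10_bracket_right: "t *s D (mu a b) = mu a (D b)"
proof -
  have "t *s D (mu a b) = - (t *s D (mu b a))"
    using bracket_antisym[of a b] D.neg by simp
  also have "\<dots> = mu a (D b)"
    using Dt10_bracket_left[of b a] bracket_antisym[of "D b" a] by simp
  finally show ?thesis .
qed

lemma Dt10_double_bracket_left: "t *s t *s D (mu (mu a b) c) = mu (mu (D a) b) c"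
  and Dt10_double_bracket_right: "t *s t *s D (mu (mu a b) c) = mu (mu a (D b)) c"
proof -
  have "t *s t *s D (mu (mu a b) c) = t *s mu (D (mu a b)) c"
    by (simp only: Dt10_bracket_left)
  also have "\<dots> = mu (t *s D (mu a b)) c"
    by (rule bracket_scale_left[symmetric])
  finally have eq: "t *s t *s D (mu (mu a b) c) = mu (t *s D (mu a b)) c" .
  then show "t *s t *s D (mu (mu a b) c) = mu (mu (D a) b) c"
    by (simp only: Dt10_bracket_left[of a b])
  from eq show "t *s t *s D (mu (mu a b) c) = mu (mu a (D b)) c"
    by (simp only: Dt10_bracket_right[of a b])
qed

text \<open>Applying \<open>D\<close> to the Jacobi identity gives \<open>a + b + c = 0\<close>; moving \<open>D\<close> onto
  \<open>x\<close> in each term costs \<open>t\<^sup>2\<close>, \<open>t\<close>, \<open>t\<^sup>2\<close> respectively and gives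
  \<open>t a + b + t c = 0\<close>, so \<open>t \<noteq> 1\<close> forces \<open>b = 0\<close>.\<close>
lemma Dt10_double_bracket:
  assumes "t \<noteq> 0" "t \<noteq> 1"
  shows "D (mu (mu y z) x) = 0"
proof -
  define a where "a = D (mu (mu x y) z)"
  define b where "b = D (mu (mu y z) x)"
  define c where "c = D (mu (mu z x) y)"
  have "a + b + c = D (mu (mu x y) z + mu (mu y z) x + mu (mu z x) y)"
    unfolding a_def b_def c_def by (simp add: D.add)
  then have sum: "a + b + c = 0"
    by (simp add: jacobi_left D.zero)
  have "t *s t *s a = mu (mu (D x) y) z"
    unfolding a_def by (rule Dt10_double_bracket_left)
  moreover have "t *s b = mu (mu y z) (D x)"
    unfolding b_def by (rule Dt10_bracket_right)
  moreover have "t *s t *s c = mu (mu z (D x)) y"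
    unfolding c_def by (rule Dt10_double_bracket_right)
  ultimately have "t *s (t *s a + b + t *s c) = 0"
    using jacobi_left[of "D x" y z] by (simp add: scale_right_distrib)
  then have scaled_sum: "t *s a + b + t *s c = 0" using assms(1) by simp
  have "(t - 1) *s (a + c) = (t *s a + b + t *s c) - (a + b + c)"
    by (simp add: algebra_simps)
  then have "(t - 1) *s (a + c) = 0" by (simp add: sum scaled_sum)
  then have "a + c = 0" using assms(2) by simp
  moreover have "b = (a + b + c) - (a + c)" by (simp add: algebra_simps)
  ultimately have "b = 0" using sum by simp
  then show ?thesis unfolding b_def .
qed

lemma Dt10_image_derived:
  assumes "t \<noteq> 0" "t \<noteq> 1"
  shows "D ` derived scale mu \<subseteq> center mu \<inter> derived scale mu"
proof -
  have "D (mu p q) \<in> center mu \<inter> derived scale mu" for p q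
  proof
    have "mu (D (mu p q)) z = t *s D (mu (mu p q) z)" for z
      by (simp only: Dt10_bracket_left)
    then show "D (mu p q) \<in> center mu"
      unfolding center_def by (simp add: Dt10_double_bracket[OF assms])
    have "D (mu p q) = inverse t *s mu (D p) q"
      using assms(1) by (simp flip: Dt10_bracket_left)
    then show "D (mu p q) \<in> derived scale mu"
      using subspace_scale[OF subspace_derived bracket_in_derived] by simp
  qed
  then have "{mu x y | x y. True} \<subseteq> D -` (center mu \<inter> derived scale mu)" by blast
  from span_minimal[OF this D.subspace_vimage[OF subspace_inter[OF subspace_center subspace_derived]]]
  show ?thesis by (simp add: derived_def image_subset_iff_subset_vimage)
qed

end

lemma Omega_subset_Dt10: "Omega scale mu \<subseteq> Dt10 scale mu t"
proof
  fix T assume "T \<in> Omega scale mu"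
  then have "Vector_Spaces.linear scale scale T" "T (mu x y) = 0" "mu (T x) y = 0" for x y
    unfolding Omega_def center_def using bracket_in_derived by blast+
  then show "T \<in> Dt10 scale mu t" unfolding Dt10_def by simp
qed

lemma subspace_Dt10: "module.subspace (fscale scale) (Dt10 scale mu t)"
proof -
  interpret vector_space_pair scale scale ..
  interpret F: vector_space "fscale scale :: 'k \<Rightarrow> ('v \<Rightarrow> 'v) \<Rightarrow> 'v \<Rightarrow> 'v"
    by (rule vector_space_fscale) (rule vector_space_axioms)
  show ?thesis
    unfolding F.subspace_def
  proof (intro conjI ballI allI)
    show "0 \<in> Dt10 scale mu t"
      unfolding Dt10_def zero_fun_def by (simp add: linear_zero)
  next
    fix D1 D2 assume "D1 \<in> Dt10 scale mu t" "D2 \<in> Dt10 scale mu t"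
    then show "D1 + D2 \<in> Dt10 scale mu t"
      unfolding Dt10_def plus_fun_def
      by (simp add: linear_compose_add scale_right_distrib bracket_add_left)
  next
    fix c D assume D: "D \<in> Dt10 scale mu t"
    then have "Vector_Spaces.linear scale scale (\<lambda>x. c *s D x)"
      by (simp add: Dt10_linear linear_compose_scale_right)
    moreover have "t *s c *s D (mu x y) = mu (c *s D x) y" for x y
      by (simp only: scale_left_commute[of t c] Dt10_bracket_left[OF D] bracket_scale_left)
    ultimately show "fscale scale c D \<in> Dt10 scale mu t"
      unfolding Dt10_def fscale_def by simp
  qed
qed

lemma restrict0_Dt10_in_Lmaps:
  assumes D: "D \<in> Dt10 scale mu t" and "t \<noteq> 0" "t \<noteq> 1"
  shows "restrict0 (derived scale mu) D
    \<in> Lmaps scale (derived scale mu) (center mu \<inter> derived scale mu)"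
proof -
  interpret D: Vector_Spaces.linear scale scale D
    by (rule Dt10_linear[OF D])
  have "x + y \<in> derived scale mu" "c *s x \<in> derived scale mu"
    if "x \<in> derived scale mu" "y \<in> derived scale mu" for x y c
    using that subspace_derived by (simp_all add: subspace_add subspace_scale)
  then show ?thesis
    using Dt10_image_derived[OF assms] unfolding Lmaps_def restrict0_def
    by (auto simp: D.add D.scale)
qed

lemma kernel_restrict0_Dt10:
  "{D \<in> Dt10 scale mu t. restrict0 (derived scale mu) D = 0} = Omega scale mu"
proof
  show "{D \<in> Dt10 scale mu t. restrict0 (derived scale mu) D = 0} \<subseteq> Omega scale mu"
  proof safe
    fix D assume D: "D \<in> Dt10 scale mu t" and "restrict0 (derived scale mu) D = 0"
    then have vanish: "D x = 0" if "x \<in> derived scale mu" for x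
      using that fun_cong[of _ 0 x] unfolding restrict0_def by fastforce
    have "mu (D x) y = 0" for x y
      using Dt10_bracket_left[OF D, of x y] vanish[OF bracket_in_derived] by simp
    then show "D \<in> Omega scale mu"
      using Dt10_linear[OF D] vanish unfolding Omega_def center_def by auto
  qed
  show "Omega scale mu \<subseteq> {D \<in> Dt10 scale mu t. restrict0 (derived scale mu) D = 0}"
    using Omega_subset_Dt10 unfolding Omega_def restrict0_def by (auto simp: fun_eq_iff)
qed

end

theorem theorem4p1:
  fixes scale :: "'k::field_char_0 \<Rightarrow> 'v::ab_group_add \<Rightarrow> 'v"
    and mu :: "'v \<Rightarrow> 'v \<Rightarrow> 'v"
    and n :: nat and t :: 'k
  assumes lie: "lie_algebra scale mu"
    and fin: "\<exists>B. finite B \<and> module.span scale B = UNIV"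
    and dimV: "vector_space.dim scale (UNIV :: 'v set) = n"
    and nonperfect: "derived scale mu \<noteq> UNIV"
    and t0: "t \<noteq> 0" and t1: "t \<noteq> 1"
  shows "vector_space.dim (fscale scale) (Omega scale mu) \<le> phi_hat scale mu t
       \<and> phi_hat scale mu t \<le> vector_space.dim (fscale scale) (Omega scale mu)
            + vector_space.dim (fscale scale)
                (Lmaps scale (derived scale mu) (center mu \<inter> derived scale mu))"
proof -
  interpret lie_alg scale mu by (rule lie_alg.intro) (rule lie)
  interpret F: vector_space "fscale scale :: 'k \<Rightarrow> ('v \<Rightarrow> 'v) \<Rightarrow> 'v \<Rightarrow> 'v"
    by (rule vector_space_fscale) (rule vector_space_axioms)
  interpret FF: vector_space_pair
      "fscale scale :: 'k \<Rightarrow> ('v \<Rightarrow> 'v) \<Rightarrow> 'v \<Rightarrow> 'v" "fscale scale :: 'k \<Rightarrow> ('v \<Rightarrow> 'v) \<Rightarrow> 'v \<Rightarrow> 'v"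
    by (intro vector_space_pair.intro F.vector_space_axioms)
  let ?R = "restrict0 (derived scale mu) :: ('v \<Rightarrow> 'v) \<Rightarrow> 'v \<Rightarrow> 'v"
  let ?L = "Lmaps scale (derived scale mu) (center mu \<inter> derived scale mu)"
  obtain B where B: "finite B" "span B = UNIV" using fin by blast
  obtain G where G: "finite G" "Lmaps scale UNIV UNIV \<subseteq> F.span G"
    using Lmaps_finite_span[OF B subspace_UNIV] .
  obtain G' where G': "finite G'" "?L \<subseteq> F.span G'"
    using Lmaps_finite_span[OF B subspace_derived] .
  have Dt10_span: "Dt10 scale mu t \<subseteq> F.span G"
    using G(2) linear_in_Lmaps_UNIV Dt10_linear by blast
  have "F.dim (Omega scale mu) \<le> F.dim (Dt10 scale mu t)"
    by (rule F.dim_subset_finite_span[OF Omega_subset_Dt10 Dt10_span G(1)])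
  moreover have "F.dim (Dt10 scale mu t) \<le> F.dim (Omega scale mu) + F.dim (?R ` Dt10 scale mu t)"
    using FF.dim_le_dim_kernel_add_dim_image[OF linear_restrict0[OF vector_space_axioms]
        subspace_Dt10 Dt10_span G(1), of "derived scale mu"]
    by (simp only: kernel_restrict0_Dt10)
  moreover have "F.dim (?R ` Dt10 scale mu t) \<le> F.dim ?L"
    using restrict0_Dt10_in_Lmaps[OF _ t0 t1] by (intro F.dim_subset_finite_span[OF _ G'(2) G'(1)]) blast
  ultimately show ?thesis unfolding phi_hat_def by linarith
qed

end
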